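(* Let $X$ be an infinite set. Then the symmetric monoid $\mathrm{Map}(X)$ of all maps $X\to X$ (under composition) is not sofic.
   Context: For a non-empty finite set $Y$, $\mathrm{Map}(Y)$ is the monoid of all maps $Y\to Y$ under composition (identity $\mathrm{Id}_Y$) with the Hamming metric $d_Y(f,g)=|\{y\in Y : f(y)\ne g(y)\}|/|Y|$. For a monoid $M$ with identity $1_M$, finite $K\subset M$ and $\varepsilon,\alpha>0$, a map $\varphi\colon M\to\mathrm{Map}(Y)$ is a $(K,\varepsilon)$-morphism if $d_Y(\varphi(k_1k_2),\varphi(k_1)\varphi(k_2))\le\varepsilon$ for all $k_1,k_2\in K$ and $d_Y(\varphi(1_M),\mathrm{Id}_Y)\le\varepsilon$; it is $(K,\alpha)$-injective if $d_Y(\varphi(k_1),\varphi(k_2))\ge\alpha$ for all distinct $k_1,k_2\in K$. $M$ is sofic if for every finite $K\subset M$ and every $\varepsilon>0$ there exist a non-empty finite set $Y$ and a $(K,1-\varepsilon)$-injective $(K,\varepsilon)$-morphism $\varphi\colon M\to\mathrm{Map}(Y)$. *)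

theory Defs
  imports Complex_Main "HOL-Algebra.Group" "HOL-Library.FuncSet"
begin

definition hamming :: "'b set \<Rightarrow> ('b \<Rightarrow> 'b) \<Rightarrow> ('b \<Rightarrow> 'b) \<Rightarrow> real" where
  "hamming Y f g = real (card {y \<in> Y. f y \<noteq> g y}) / real (card Y)"

text \<open>The finite sets Y are taken as
  finite subsets of nat (every finite set is in bijection with one); a map
  phi : M -> Map(Y) is a function sending each element of M to a self-map of Y.\<close>
definition sofic :: "('a, 'c) monoid_scheme \<Rightarrow> bool" where
  "sofic M \<longleftrightarrow>
    (\<forall>K \<epsilon>. K \<subseteq> carrier M \<and> finite K \<and> (\<epsilon>::real) > 0 \<longrightarrow>
      (\<exists>(Y::nat set) (\<phi>::'a \<Rightarrow> nat \<Rightarrow> nat).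
         finite Y \<and> Y \<noteq> {} \<and>
         (\<forall>m \<in> carrier M. \<phi> m \<in> Y \<rightarrow> Y) \<and>
         (\<forall>k1\<in>K. \<forall>k2\<in>K. hamming Y (\<phi> (k1 \<otimes>\<^bsub>M\<^esub> k2)) (\<phi> k1 \<circ> \<phi> k2) \<le> \<epsilon>) \<and>
         hamming Y (\<phi> \<one>\<^bsub>M\<^esub>) id \<le> \<epsilon> \<and>
         (\<forall>k1\<in>K. \<forall>k2\<in>K. k1 \<noteq> k2 \<longrightarrow> hamming Y (\<phi> k1) (\<phi> k2) \<ge> 1 - \<epsilon>)))"

definition Map_monoid :: "'a set \<Rightarrow> ('a \<Rightarrow> 'a) monoid" where
  "Map_monoid X = \<lparr>carrier = X \<rightarrow>\<^sub>E X, mult = (\<lambda>f g. compose X f g), one = restrict id X\<rparr>"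

end

theory Submission
  imports Defs
begin

text \<open>A sofic monoid is directly finite: in a finite set Y, the map B sends the fixed points
  of A \<circ> B injectively into the fixed points of B \<circ> A, so B \<circ> A is at least as close to the
  identity as A \<circ> B. Hence if a b = 1, the approximations of b a and 1 are close to each other,
  contradicting approximate injectivity unless b a = 1. For infinite X, Map(X) is not directly
  finite: a bijection of X onto X minus a point, together with a left inverse of it, gives
  a b = 1 but b a \<noteq> 1.\<close>

definition directly_finite :: "('a, 'c) monoid_scheme \<Rightarrow> bool" where
  "directly_finite M \<longleftrightarrow>
    (\<forall>a \<in> carrier M. \<forall>b \<in> carrier M. a \<otimes>\<^bsub>M\<^esub> b = \<one>\<^bsub>M\<^esub> \<longrightarrow> b \<otimes>\<^bsub>M\<^esub> a = \<one>\<^bsub>M\<^esub>)"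

lemma hamming_commute: "hamming Y f g = hamming Y g f"
  unfolding hamming_def by (metis (mono_tags) eq_commute)

lemma hamming_triangle:
  assumes "finite Y"
  shows "hamming Y f h \<le> hamming Y f g + hamming Y g h"
proof -
  have "card {y \<in> Y. f y \<noteq> h y} \<le> card ({y \<in> Y. f y \<noteq> g y} \<union> {y \<in> Y. g y \<noteq> h y})"
    by (rule card_mono) (use assms in auto)
  also have "\<dots> \<le> card {y \<in> Y. f y \<noteq> g y} + card {y \<in> Y. g y \<noteq> h y}"
    by (rule card_Un_le)
  finally show ?thesis
    unfolding hamming_def by (simp add: divide_right_mono add_divide_distrib[symmetric])
qed

lemma hamming_id_eq_card_Diff_fixpoints:
  assumes "finite Y"
  shows "hamming Y f id = real (card Y - card {y \<in> Y. f y = y}) / real (card Y)"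
proof -
  have "{y \<in> Y. f y \<noteq> id y} = Y - {y \<in> Y. f y = y}" by auto
  then show ?thesis unfolding hamming_def using assms by (simp add: card_Diff_subset)
qed

lemma hamming_comp_swap_id_le:
  assumes "finite Y" and B: "B \<in> Y \<rightarrow> Y"
  shows "hamming Y (B \<circ> A) id \<le> hamming Y (A \<circ> B) id"
proof -
  let ?S = "{y \<in> Y. (A \<circ> B) y = y}" and ?T = "{y \<in> Y. (B \<circ> A) y = y}"
  have "inj_on B ?S" by (rule inj_onI) (metis (mono_tags, lifting) comp_apply mem_Collect_eq)
  moreover have "B ` ?S \<subseteq> ?T" using B by auto
  ultimately have "card ?S \<le> card ?T"
    using assms(1) by (metis (no_types, lifting) card_inj_on_le finite_subset mem_Collect_eq subsetI)
  then show ?thesis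
    using assms(1) by (simp add: hamming_id_eq_card_Diff_fixpoints divide_right_mono)
qed

lemma sofic_imp_directly_finite:
  assumes "monoid M" and "sofic M"
  shows "directly_finite M"
  unfolding directly_finite_def
proof (intro ballI impI)
  fix a b assume a: "a \<in> carrier M" and b: "b \<in> carrier M" and ab: "a \<otimes>\<^bsub>M\<^esub> b = \<one>\<^bsub>M\<^esub>"
  show "b \<otimes>\<^bsub>M\<^esub> a = \<one>\<^bsub>M\<^esub>"
  proof (rule ccontr)
    assume ba: "b \<otimes>\<^bsub>M\<^esub> a \<noteq> \<one>\<^bsub>M\<^esub>"
    define K where "K = {a, b, \<one>\<^bsub>M\<^esub>, b \<otimes>\<^bsub>M\<^esub> a}"
    have "K \<subseteq> carrier M" "finite K"
      unfolding K_def using a b monoid.m_closed[OF assms(1)] monoid.one_closed[OF assms(1)] by auto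
    then obtain Y and \<phi> :: "'a \<Rightarrow> nat \<Rightarrow> nat" where
      Y: "finite Y" and maps: "\<forall>m \<in> carrier M. \<phi> m \<in> Y \<rightarrow> Y" and
      mult: "\<forall>k1\<in>K. \<forall>k2\<in>K. hamming Y (\<phi> (k1 \<otimes>\<^bsub>M\<^esub> k2)) (\<phi> k1 \<circ> \<phi> k2) \<le> 1/10" and
      one: "hamming Y (\<phi> \<one>\<^bsub>M\<^esub>) id \<le> 1/10" and
      inj: "\<forall>k1\<in>K. \<forall>k2\<in>K. k1 \<noteq> k2 \<longrightarrow> hamming Y (\<phi> k1) (\<phi> k2) \<ge> 1 - 1/10"
      using \<open>sofic M\<close> unfolding sofic_def by (elim allE[of _ K] allE[of _ "1/10"]) auto
    have "hamming Y (\<phi> \<one>\<^bsub>M\<^esub>) (\<phi> a \<circ> \<phi> b) \<le> 1/10"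
      using mult ab unfolding K_def by force
    then have "hamming Y (\<phi> a \<circ> \<phi> b) id \<le> 2/10"
      using hamming_triangle[OF Y, where f = "\<phi> a \<circ> \<phi> b" and g = "\<phi> \<one>\<^bsub>M\<^esub>" and h = id] one
        hamming_commute[of Y "\<phi> a \<circ> \<phi> b" "\<phi> \<one>\<^bsub>M\<^esub>"]
      by linarith
    then have ba_id: "hamming Y (\<phi> b \<circ> \<phi> a) id \<le> 2/10"
      using hamming_comp_swap_id_le[OF Y, of "\<phi> b" "\<phi> a"] maps b by fastforce
    have "hamming Y (\<phi> (b \<otimes>\<^bsub>M\<^esub> a)) (\<phi> b \<circ> \<phi> a) \<le> 1/10"
      using mult unfolding K_def by force
    then have "hamming Y (\<phi> (b \<otimes>\<^bsub>M\<^esub> a)) (\<phi> \<one>\<^bsub>M\<^esub>) \<le> 4/10"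
      using ba_id one hamming_triangle[OF Y, where f = "\<phi> (b \<otimes>\<^bsub>M\<^esub> a)" and g = "\<phi> b \<circ> \<phi> a" and h = "\<phi> \<one>\<^bsub>M\<^esub>"]
        hamming_triangle[OF Y, where f = "\<phi> b \<circ> \<phi> a" and g = id and h = "\<phi> \<one>\<^bsub>M\<^esub>"]
        hamming_commute[of Y id "\<phi> \<one>\<^bsub>M\<^esub>"]
      by linarith
    moreover have "hamming Y (\<phi> (b \<otimes>\<^bsub>M\<^esub> a)) (\<phi> \<one>\<^bsub>M\<^esub>) \<ge> 1 - 1/10"
      using inj ba unfolding K_def by blast
    ultimately show False by linarith
  qed
qed

lemma monoid_Map_monoid: "monoid (Map_monoid X)"
proof -
  have "restrict id X = (\<lambda>x\<in>X. x)" by (simp add: id_def)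
  then show ?thesis
    by (intro monoidI) (auto simp: Map_monoid_def compose_def PiE_def Pi_def extensional_def fun_eq_iff)
qed

lemma Map_monoid_not_directly_finite:
  assumes "infinite X"
  shows "\<not> directly_finite (Map_monoid X)"
proof -
  from assms obtain x0 where x0: "x0 \<in> X" by (metis finite.emptyI ex_in_conv)
  obtain h where "bij_betw h X (X - {x0})" using infinite_imp_bij_betw[OF assms] by blast
  then have h_inj: "inj_on h X" and h_into: "\<And>x. x \<in> X \<Longrightarrow> h x \<in> X - {x0}"
    by (auto simp: bij_betw_def)
  define b where "b = restrict h X"
  define a where "a = (\<lambda>x\<in>X. if x \<in> h ` X then inv_into X h x else x0)"
  let ?M = "Map_monoid X"
  have a: "a \<in> carrier ?M" and b: "b \<in> carrier ?M"
    unfolding Map_monoid_def a_def b_def using x0 h_inj h_into by auto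
  have "a \<otimes>\<^bsub>?M\<^esub> b = \<one>\<^bsub>?M\<^esub>"
    unfolding Map_monoid_def a_def b_def compose_def using h_inj h_into by (auto intro!: ext)
  moreover have "(b \<otimes>\<^bsub>?M\<^esub> a) x0 \<noteq> \<one>\<^bsub>?M\<^esub> x0"
  proof -
    have "x0 \<notin> h ` X" using h_into by blast
    then show ?thesis
      using x0 h_into[OF x0] by (simp add: Map_monoid_def compose_def a_def b_def)
  qed
  ultimately show ?thesis unfolding directly_finite_def using a b by metis
qed

theorem corollary5p8:
  fixes X :: "'a set"
  assumes "infinite X"
  shows "\<not> sofic (Map_monoid X)"
  using sofic_imp_directly_finite[OF monoid_Map_monoid] Map_monoid_not_directly_finite[OF assms]
  by blast

end
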